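(* Let $\Sigma=\{0,1\}$. For any $D,T\in\mathbb N_+$ there exists $\mathcal F\subseteq\Sigma^{\Sigma^*}$ such that $\mathrm{VCdim}(\mathcal F)=D$ but $\mathrm{VCdim}(\mathcal F^{\mathrm{e2e}(T)})=T\cdot D$ over the domain $\Sigma^n$ with $n=\lceil\log_2(DT)\rceil+1$.
   Context: For $f:\Sigma^*\to\Sigma$, $\bar f(\mathbf x)$ is $\mathbf x$ with $f(\mathbf x)$ appended; $f^{\mathrm{CoT}(T)}=\bar f^{\circ T}$; $f^{\mathrm{e2e}(T)}(\mathbf x)$ is the last token of $f^{\mathrm{CoT}(T)}(\mathbf x)$; $\mathcal F^{\mathrm{e2e}(T)}=\{f^{\mathrm{e2e}(T)}:f\in\mathcal F\}$. $\mathrm{VCdim}$ is the VC dimension ($\mathrm{VCdim}(\mathcal F)$ over the domain $\Sigma^*$; $\mathrm{VCdim}(\mathcal F^{\mathrm{e2e}(T)})$ of the restriction to $\Sigma^n$). *)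

theory Defs
  imports Complex_Main "HOL-Library.Extended_Nat"
begin

text \<open>Alphabet Sigma = {0,1} is modelled by bool; Sigma^* by bool list.
  A next-token predictor is f :: bool list \<Rightarrow> bool.\<close>

definition append_next :: "(bool list \<Rightarrow> bool) \<Rightarrow> bool list \<Rightarrow> bool list" where
  "append_next f x = x @ [f x]"

definition cot :: "nat \<Rightarrow> (bool list \<Rightarrow> bool) \<Rightarrow> bool list \<Rightarrow> bool list" where
  "cot T f = (append_next f ^^ T)"

definition e2e :: "nat \<Rightarrow> (bool list \<Rightarrow> bool) \<Rightarrow> bool list \<Rightarrow> bool" where
  "e2e T f x = last (cot T f x)"

definition e2e_class :: "nat \<Rightarrow> (bool list \<Rightarrow> bool) set \<Rightarrow> (bool list \<Rightarrow> bool) set" where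
  "e2e_class T F = e2e T ` F"

definition shatters :: "('a \<Rightarrow> bool) set \<Rightarrow> 'a set \<Rightarrow> bool" where
  "shatters H S \<longleftrightarrow> (\<forall>B\<subseteq>S. \<exists>h\<in>H. \<forall>x\<in>S. h x = (x \<in> B))"

definition VCdim_on :: "'a set \<Rightarrow> ('a \<Rightarrow> bool) set \<Rightarrow> enat" where
  "VCdim_on X H = Sup {enat (card S) | S. S \<subseteq> X \<and> finite S \<and> shatters H S}"

end

theory Submission
  imports Defs
begin

text \<open>
  Split the \<open>D * T\<close> binary codes of length \<open>n\<close> into \<open>D\<close> blocks of \<open>T\<close> codes and, for
  thresholds \<open>\<theta>\<close> indexed by blocks, let \<open>f\<^sub>\<theta> x\<close> hold iff \<open>x\<close> starts with a code and the
  query of \<open>x\<close> is at most \<open>\<theta> (block x)\<close>. Within a block every \<open>f\<^sub>\<theta>\<close> is downward closed in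
  the query, so a shattered set meets each block at most once and the VC dimension is \<open>D\<close>.
  Under chain of thought, however, the queries on the generated suffix run a binary search that
  writes the binary digits of \<open>\<theta> (block x)\<close>, one per step, and the last step reads off the
  digit belonging to the position of \<open>x\<close> in its block. Thus any \<open>T\<close> labels per block are
  realised and the end-to-end class shatters all \<open>D * T\<close> codes, but nothing off the codes.
\<close>

lemma VCdim_on_eqI:
  assumes "\<And>S. S \<subseteq> X \<Longrightarrow> finite S \<Longrightarrow> shatters H S \<Longrightarrow> card S \<le> m"
    and "S\<^sub>0 \<subseteq> X" "finite S\<^sub>0" "shatters H S\<^sub>0" "card S\<^sub>0 = m"
  shows "VCdim_on X H = enat m"
  unfolding VCdim_on_def
proof (rule antisym)
  show "Sup {enat (card S) |S. S \<subseteq> X \<and> finite S \<and> shatters H S} \<le> enat m"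
    by (rule Sup_least) (use assms(1) in auto)
  show "enat m \<le> Sup {enat (card S) |S. S \<subseteq> X \<and> finite S \<and> shatters H S}"
    by (rule Sup_upper) (use assms(2-5) in auto)
qed

lemma shatters_imp_ex_true:
  assumes "shatters H S" "x \<in> S"
  shows "\<exists>h\<in>H. h x"
  using assms unfolding shatters_def by blast

lemma shatters_thresholds_imp_inj_on:
  fixes q :: "'a \<Rightarrow> 'b::linorder"
  assumes sh: "shatters (range (\<lambda>\<theta> x. P x \<and> q x \<le> \<theta> (b x))) S"
  shows "inj_on b S"
proof (rule inj_onI, rule ccontr)
  have no_pair: False if "x \<in> S" "y \<in> S" "b x = b y" "x \<noteq> y" "q x \<le> q y" for x y
  proof -
    have "{y} \<subseteq> S" using \<open>y \<in> S\<close> by simp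
    then obtain h where "h \<in> range (\<lambda>\<theta> x. P x \<and> q x \<le> \<theta> (b x))" "\<forall>z\<in>S. h z = (z \<in> {y})"
      using sh unfolding shatters_def by blast
    then obtain \<theta> where \<theta>: "\<And>z. z \<in> S \<Longrightarrow> (P z \<and> q z \<le> \<theta> (b z)) = (z = y)"
      by auto
    have "P x"
      using shatters_imp_ex_true[OF sh \<open>x \<in> S\<close>] by auto
    moreover have "q x \<le> \<theta> (b x)"
      using \<theta>[OF \<open>y \<in> S\<close>] \<open>q x \<le> q y\<close> \<open>b x = b y\<close> by (metis order.trans)
    ultimately show False
      using \<theta>[OF \<open>x \<in> S\<close>] \<open>x \<noteq> y\<close> by simp
  qed
  fix x y assume "x \<in> S" "y \<in> S" "b x = b y" "x \<noteq> y"
  then show False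
    using no_pair[of x y] no_pair[of y x] by (metis linear)
qed

lemma shatters_thresholds:
  fixes q :: "'a \<Rightarrow> nat"
  assumes "\<And>x. x \<in> S \<Longrightarrow> P x" "\<And>x. x \<in> S \<Longrightarrow> 0 < q x" "inj_on b S"
  shows "shatters (range (\<lambda>\<theta> x. P x \<and> q x \<le> \<theta> (b x))) S"
  unfolding shatters_def
proof (intro allI impI)
  fix B assume "B \<subseteq> S"
  define \<theta> where "\<theta> c = (if c \<in> b ` B then q (the_inv_into S b c) else 0)" for c
  have "(P x \<and> q x \<le> \<theta> (b x)) = (x \<in> B)" if "x \<in> S" for x
    using that assms \<open>B \<subseteq> S\<close> unfolding \<theta>_def
    by (auto simp: the_inv_into_f_f inj_on_image_mem_iff)
  then show "\<exists>h\<in>range (\<lambda>\<theta> x. P x \<and> q x \<le> \<theta> (b x)). \<forall>x\<in>S. h x = (x \<in> B)"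
    by (intro bexI[OF _ rangeI[of _ \<theta>]]) auto
qed

fun bits_to_nat :: "bool list \<Rightarrow> nat" where
  "bits_to_nat [] = 0"
| "bits_to_nat (b # bs) = of_bool b * 2 ^ length bs + bits_to_nat bs"

lemma bits_to_nat_append:
  "bits_to_nat (xs @ ys) = bits_to_nat xs * 2 ^ length ys + bits_to_nat ys"
  by (induction xs) (auto simp: algebra_simps power_add)

lemma bits_to_nat_less: "bits_to_nat bs < 2 ^ length bs"
  by (induction bs) (auto simp: of_bool_def)

text \<open>One step of binary search: the next digit of a number is found by comparing it with
  the midpoint of the interval fixed by the digits already known.\<close>

lemma nth_iff_bits_to_nat_ge:
  assumes "s < length bs"
  shows "bs ! s \<longleftrightarrow>
    (2 * bits_to_nat (take s bs) + 1) * 2 ^ (length bs - Suc s) \<le> bits_to_nat bs"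
proof -
  define p r where "p = bits_to_nat (take s bs)" and "r = bits_to_nat (drop (Suc s) bs)"
  define a :: nat where "a = 2 ^ (length bs - Suc s)"
  have "bs = take s bs @ bs ! s # drop (Suc s) bs"
    using assms by (simp add: id_take_nth_drop)
  then have "bits_to_nat bs = p * 2 ^ Suc (length bs - Suc s) + of_bool (bs ! s) * a + r"
    unfolding p_def r_def a_def using assms by (metis bits_to_nat_append bits_to_nat.simps(2)
        length_Cons length_drop add.assoc)
  then have "bits_to_nat bs = (2 * p + of_bool (bs ! s)) * a + r"
    unfolding a_def by (simp add: algebra_simps)
  moreover have "r < a"
    unfolding r_def a_def using bits_to_nat_less[of "drop (Suc s) bs"] by simp
  ultimately show ?thesis
    unfolding p_def[symmetric] a_def[symmetric] by (cases "bs ! s") (auto simp: algebra_simps)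
qed

lemma cot_0 [simp]: "cot 0 f x = x"
  by (simp add: cot_def)

lemma cot_Suc: "cot (Suc s) f x = cot s f x @ [f (cot s f x)]"
  by (simp add: cot_def append_next_def)

lemma length_cot: "length (cot s f x) = length x + s"
  by (induction s) (auto simp: cot_Suc)

lemma take_length_cot: "take (length x) (cot s f x) = x"
  by (induction s) (auto simp: cot_Suc length_cot)

lemma e2e_Suc: "e2e (Suc s) f x = f (cot s f x)"
  by (simp add: e2e_def cot_Suc)

lemma le_two_power_ceiling_log:
  assumes "0 < m"
  shows "m \<le> 2 ^ nat \<lceil>log 2 (real m)\<rceil>"
proof -
  have "real m = 2 powr log 2 (real m)"
    using assms by simp
  also have "\<dots> \<le> 2 powr real (nat \<lceil>log 2 (real m)\<rceil>)"
    by (rule powr_mono) (simp_all add: real_nat_ceiling_ge)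
  also have "\<dots> = 2 ^ nat \<lceil>log 2 (real m)\<rceil>"
    by (simp add: powr_realpow)
  finally have "real m \<le> real (2 ^ nat \<lceil>log 2 (real m)\<rceil>)"
    by simp
  then show ?thesis
    by (simp only: of_nat_le_iff)
qed

lemma ex_inj_on_bool_lists_length:
  assumes "m \<le> 2 ^ n"
  shows "\<exists>code :: nat \<Rightarrow> bool list. inj_on code {..<m} \<and> (\<forall>k<m. length (code k) = n)"
proof -
  let ?L = "{xs :: bool list. set xs \<subseteq> UNIV \<and> length xs = n}"
  have "card {..<m} \<le> card ?L"
    unfolding card_lists_length_eq[OF finite_UNIV] using assms by simp
  then obtain code where "code ` {..<m} \<subseteq> ?L" "inj_on code {..<m}"
    using card_le_inj[OF finite_lessThan finite_lists_length_eq[OF finite_UNIV]] by blast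
  then show ?thesis
    by (intro exI[of _ code]) auto
qed

locale block_coding =
  fixes D T n :: nat and code :: "nat \<Rightarrow> bool list"
  assumes T_pos: "0 < T"
    and inj_code: "inj_on code {..<D * T}"
    and length_code: "\<And>k. k < D * T \<Longrightarrow> length (code k) = n"
begin

definition codes :: "bool list set" where
  "codes = code ` {..<D * T}"

definition index :: "bool list \<Rightarrow> nat" where
  "index x = inv_into {..<D * T} code (take n x)"

definition block :: "bool list \<Rightarrow> nat" where
  "block x = index x div T"

text \<open>The query of the point \<open>code k @ ys\<close>, where \<open>j = k mod T\<close> is its position in the block.
  While fewer than \<open>T - 1\<close> digits \<open>ys\<close> have been written, it is the midpoint of the binary search
  for the next digit of the threshold; afterwards the last position of the block asks for the
  final digit in the same way, and every other position \<open>j\<close> copies the digit \<open>ys ! j\<close>.\<close>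

definition query :: "nat \<Rightarrow> bool list \<Rightarrow> nat" where
  "query j ys =
    (if Suc (length ys) < T \<or> j = T - 1 then (2 * bits_to_nat ys + 1) * 2 ^ (T - Suc (length ys))
     else if ys ! j then 0 else 2 ^ T)"

definition predictor :: "(nat \<Rightarrow> nat) \<Rightarrow> bool list \<Rightarrow> bool" where
  "predictor \<theta> x \<longleftrightarrow> take n x \<in> codes \<and> query (index x mod T) (drop n x) \<le> \<theta> (block x)"

lemma card_codes: "card codes = T * D"
  unfolding codes_def using card_image[OF inj_code] by simp

lemma index_code_append: "k < D * T \<Longrightarrow> index (code k @ ys) = k"
  unfolding index_def using length_code inj_code by (simp add: inv_into_f_f)

lemma predictor_code_append:
  "k < D * T \<Longrightarrow> predictor \<theta> (code k @ ys) \<longleftrightarrow> query (k mod T) ys \<le> \<theta> (k div T)"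
  unfolding predictor_def block_def codes_def using length_code by (simp add: index_code_append)

lemma block_less: "take n x \<in> codes \<Longrightarrow> block x < D"
  unfolding block_def index_def codes_def using T_pos inj_code
  by (auto simp: less_mult_imp_div_less)

lemma range_predictor:
  "range predictor =
    range (\<lambda>\<theta> x. take n x \<in> codes \<and> query (index x mod T) (drop n x) \<le> \<theta> (block x))"
  by (simp add: predictor_def[abs_def])

lemma VCdim_predictors: "VCdim_on UNIV (range predictor) = enat D"
proof (rule VCdim_on_eqI)
  fix S assume "finite S" and sh: "shatters (range predictor) S"
  have "take n x \<in> codes" if "x \<in> S" for x
    using shatters_imp_ex_true[OF sh that] by (auto simp: predictor_def)
  then have "block ` S \<subseteq> {..<D}"
    using block_less by auto
  moreover have "inj_on block S"
    using sh unfolding range_predictor by (rule shatters_thresholds_imp_inj_on)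
  ultimately show "card S \<le> D"
    using card_inj_on_le[of block S "{..<D}"] by auto
next
  define leader where "leader i = code (i * T)" for i
  have leader_code: "i * T < D * T" if "i < D" for i
    using that T_pos by simp
  have block_leader: "block (leader i) = i" if "i < D" for i
    using index_code_append[OF leader_code[OF that], of "[]"] T_pos
    unfolding block_def leader_def by simp
  have inj_leader: "inj_on leader {..<D}"
    by (rule inj_on_inverseI[where g = block]) (simp add: block_leader)
  show "leader ` {..<D} \<subseteq> UNIV" "finite (leader ` {..<D})"
    by simp_all
  show "card (leader ` {..<D}) = D"
    using card_image[OF inj_leader] by simp
  show "shatters (range predictor) (leader ` {..<D})"
    unfolding range_predictor
  proof (rule shatters_thresholds)
    fix x assume "x \<in> leader ` {..<D}"
    then obtain i where "i < D" "x = leader i" by auto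
    then show "take n x \<in> codes" "0 < query (index x mod T) (drop n x)"
      using leader_code[OF \<open>i < D\<close>] index_code_append[of "i * T" "[]"] length_code
      unfolding leader_def codes_def query_def by auto
  next
    show "inj_on block (leader ` {..<D})"
      by (rule inj_on_inverseI[where g = leader]) (auto simp: block_leader)
  qed
qed

lemma cot_predictor_code:
  assumes "k < D * T" "length (L (k div T)) = T" "s < T"
  shows "cot s (predictor (\<lambda>i. bits_to_nat (L i))) (code k) = code k @ take s (L (k div T))"
  using \<open>s < T\<close>
proof (induction s)
  case 0
  then show ?case by simp
next
  case (Suc s)
  let ?bs = "L (k div T)"
  have "predictor (\<lambda>i. bits_to_nat (L i)) (code k @ take s ?bs) \<longleftrightarrow>
      (2 * bits_to_nat (take s ?bs) + 1) * 2 ^ (T - Suc s) \<le> bits_to_nat ?bs"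
    using Suc.prems assms(1,2) by (simp add: predictor_code_append query_def)
  also have "\<dots> \<longleftrightarrow> ?bs ! s"
    using nth_iff_bits_to_nat_ge[of s ?bs] Suc.prems assms(2) by simp
  finally show ?case
    using Suc assms(2) by (simp add: cot_Suc take_Suc_conv_app_nth)
qed

lemma e2e_predictor_code:
  assumes "k < D * T" "length (L (k div T)) = T"
  shows "e2e T (predictor (\<lambda>i. bits_to_nat (L i))) (code k) = L (k div T) ! (k mod T)"
proof -
  let ?bs = "L (k div T)" and ?j = "k mod T"
  have T: "Suc (T - 1) = T"
    using T_pos by simp
  have "e2e T (predictor (\<lambda>i. bits_to_nat (L i))) (code k) \<longleftrightarrow>
      query ?j (take (T - 1) ?bs) \<le> bits_to_nat ?bs"
    using e2e_Suc[of "T - 1"] cot_predictor_code[of k L "T - 1"] assms T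
    by (simp add: predictor_code_append)
  also have "\<dots> \<longleftrightarrow> ?bs ! ?j"
  proof (cases "?j = T - 1")
    case True
    then show ?thesis
      using nth_iff_bits_to_nat_ge[of "T - 1" ?bs] assms(2) T_pos by (simp add: query_def)
  next
    case False
    then have "?j < T - 1"
      using T_pos by (metis Suc_pred' less_antisym mod_less_divisor)
    then show ?thesis
      using bits_to_nat_less[of ?bs] assms(2) by (auto simp: query_def)
  qed
  finally show ?thesis .
qed

lemma e2e_predictor_imp_mem_codes:
  assumes "length x = n" "e2e T (predictor \<theta>) x"
  shows "x \<in> codes"
proof -
  have "predictor \<theta> (cot (T - 1) (predictor \<theta>) x)"
    using assms(2) e2e_Suc[of "T - 1"] T_pos by simp
  then show ?thesis
    using take_length_cot[of x "T - 1" "predictor \<theta>"] assms(1) by (simp add: predictor_def)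
qed

lemma VCdim_e2e_predictors:
  "VCdim_on {x. length x = n} (e2e_class T (range predictor)) = enat (T * D)"
proof (rule VCdim_on_eqI)
  fix S assume "S \<subseteq> {x. length x = n}" and sh: "shatters (e2e_class T (range predictor)) S"
  then have "S \<subseteq> codes"
    using shatters_imp_ex_true[OF sh] e2e_predictor_imp_mem_codes
    by (fastforce simp: e2e_class_def)
  then show "card S \<le> T * D"
    using card_mono[of codes S] card_codes by (simp add: codes_def)
next
  show "codes \<subseteq> {x. length x = n}" "finite codes" "card codes = T * D"
    using length_code card_codes by (auto simp: codes_def)
  show "shatters (e2e_class T (range predictor)) codes"
    unfolding shatters_def
  proof (intro allI impI)
    fix B assume "B \<subseteq> codes"
    define L where "L i = map (\<lambda>j. code (i * T + j) \<in> B) [0..<T]" for i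
    have "e2e T (predictor (\<lambda>i. bits_to_nat (L i))) (code k) = (code k \<in> B)" if "k < D * T" for k
      using e2e_predictor_code[OF that, of L] T_pos by (simp add: L_def)
    then show "\<exists>h\<in>e2e_class T (range predictor). \<forall>x\<in>codes. h x = (x \<in> B)"
      unfolding e2e_class_def codes_def by blast
  qed
qed

end

theorem theoremE1:
  fixes D T :: nat
  assumes "D \<ge> 1" and "T \<ge> 1"
  shows "\<exists>F :: (bool list \<Rightarrow> bool) set.
           VCdim_on UNIV F = enat D \<and>
           VCdim_on {x. length x = nat \<lceil>log 2 (real (D * T))\<rceil> + 1} (e2e_class T F)
             = enat (T * D)"
proof -
  define n where "n = nat \<lceil>log 2 (real (D * T))\<rceil> + 1"
  have "D * T \<le> 2 ^ n"
    using le_two_power_ceiling_log[of "D * T"] assms unfolding n_def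
    by (simp add: order_trans[OF _ power_increasing])
  then obtain code :: "nat \<Rightarrow> bool list"
    where "inj_on code {..<D * T}" "\<forall>k<D * T. length (code k) = n"
    by (blast dest: ex_inj_on_bool_lists_length)
  then interpret block_coding D T n code
    using assms by unfold_locales auto
  show ?thesis
    unfolding n_def[symmetric] using VCdim_predictors VCdim_e2e_predictors by blast
qed

end
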